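(* Let $K$ be the knot $6_2=K(11,3)$. For every $r\in(0,8)\cap\mathbb{Q}$, the fundamental group $\pi_1(S^3_r(K))$ admits a non-abelian representation into $SL(2,\mathbb{R})$.
   Context: $S^3_r(K)$ denotes Dehn surgery on $K$ with slope $r$. *)

theory Defs
  imports "HOL-Analysis.Analysis"
begin

text \<open>
  The knot group has the (Schubert/Riley) two-generator one-relator presentation
    < a, b | a w = w b >,
  with w = b^(e_1) a^(e_2) b^(e_3) ... a^(e_(alpha-1)),  e_i = (-1)^floor(i beta / alpha),
  where a, b are meridians.  The preferred longitude commuting with a is
    lambda = w w^rev a^(-2 sigma),  sigma = e_1 + ... + e_(alpha-1),
  (w^rev = w spelled backwards).  The fundamental group of S^3_(p/q)(K) is obtained by adding
  the relation a^p lambda^q = 1 (p/q in lowest terms, q > 0).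
\<close>

datatype gen = GA | GB

text \<open>A letter is a generator together with its exponent sign (True = +1, False = -1).\<close>
type_synonym word = "(gen \<times> bool) list"

definition inv_word :: "word \<Rightarrow> word" where
  "inv_word w = rev (map (\<lambda>(g, e). (g, \<not> e)) w)"

definition word_pow :: "word \<Rightarrow> int \<Rightarrow> word" where
  "word_pow w n = (if 0 \<le> n then concat (replicate (nat n) w)
                   else concat (replicate (nat (- n)) (inv_word w)))"

definition tb_sign :: "nat \<Rightarrow> nat \<Rightarrow> nat \<Rightarrow> bool" where
  "tb_sign alpha beta i = even ((i * beta) div alpha)"

definition tb_word :: "nat \<Rightarrow> nat \<Rightarrow> word" where
  "tb_word alpha beta =
     map (\<lambda>i. (if odd i then GB else GA, tb_sign alpha beta i)) [1..<alpha]"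

definition tb_sigma :: "nat \<Rightarrow> nat \<Rightarrow> int" where
  "tb_sigma alpha beta = (\<Sum>i\<in>{1..<alpha}. if tb_sign alpha beta i then 1 else -1)"

definition tb_relator :: "nat \<Rightarrow> nat \<Rightarrow> word" where
  "tb_relator alpha beta =
     [(GA, True)] @ tb_word alpha beta @ [(GB, False)] @ inv_word (tb_word alpha beta)"

definition tb_longitude :: "nat \<Rightarrow> nat \<Rightarrow> word" where
  "tb_longitude alpha beta =
     tb_word alpha beta @ rev (tb_word alpha beta) @ word_pow [(GA, True)] (- 2 * tb_sigma alpha beta)"

definition surgery_relator :: "nat \<Rightarrow> nat \<Rightarrow> rat \<Rightarrow> word" where
  "surgery_relator alpha beta r =
     (let (p, q) = quotient_of r in
      word_pow [(GA, True)] p @ word_pow (tb_longitude alpha beta) q)"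

fun letter_mat :: "real^2^2 \<Rightarrow> real^2^2 \<Rightarrow> gen \<times> bool \<Rightarrow> real^2^2" where
  "letter_mat A B (GA, e) = (if e then A else matrix_inv A)"
| "letter_mat A B (GB, e) = (if e then B else matrix_inv B)"

definition eval_word :: "real^2^2 \<Rightarrow> real^2^2 \<Rightarrow> word \<Rightarrow> real^2^2" where
  "eval_word A B w = foldr (\<lambda>l M. letter_mat A B l ** M) w (mat 1)"

text \<open>A homomorphism pi_1(S^3_r(K(alpha,beta))) \<rightarrow> SL(2,R) is determined by the images A, B
  of the generators, which must lie in SL(2,R) and kill both relators; it is non-abelian iff
  its image is non-abelian iff A and B do not commute.\<close>
definition has_nonabelian_SL2R_rep_surgery :: "nat \<Rightarrow> nat \<Rightarrow> rat \<Rightarrow> bool" where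
  "has_nonabelian_SL2R_rep_surgery alpha beta r \<longleftrightarrow>
     (\<exists>A B :: real^2^2. det A = 1 \<and> det B = 1 \<and>
        eval_word A B (tb_relator alpha beta) = mat 1 \<and>
        eval_word A B (surgery_relator alpha beta r) = mat 1 \<and>
        A ** B \<noteq> B ** A)"

end

theory Submission
  imports Defs
begin

text \<open>
  Riley's matrices A = [[m, 1], [0, 1/m]] and B = [[m, 0], [u, 1/m]] satisfy the relation of
  K(11,3) whenever the Riley polynomial vanishes. The longitude then commutes with A, so it is
  upper triangular with diagonal (1/\<lambda>, \<lambda>), and the surgery relation a^p \<lambda>^q = 1 reduces
  to the scalar equation m^p = \<lambda>^q. In the coordinate z = u + m^2 + m^-2 the Riley polynomial is
  linear in m^2 + m^-2, which yields a real curve of representations, with m > 1, parametrised by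
  z \<in> (2, 3). At z = (3 + sqrt 5)/2 the curve meets u = 0 and \<lambda> = 1 < m^p; as z \<rightarrow> 2 we have
  m \<rightarrow> \<infinity> and \<lambda> \<approx> m^8, so m^p < \<lambda>^q because p/q < 8. The intermediate value theorem gives a
  solution, and A, B do not commute since m \<noteq> \<plusminus>1.
\<close>

definition mat2 :: "real \<Rightarrow> real \<Rightarrow> real \<Rightarrow> real \<Rightarrow> real^2^2" where
  "mat2 a b c d = (\<chi> i j. if i = 1 then (if j = 1 then a else b) else (if j = 1 then c else d))"

lemma mat2_nth [simp]:
  "mat2 a b c d $ 1 $ 1 = a" "mat2 a b c d $ 1 $ 2 = b"
  "mat2 a b c d $ 2 $ 1 = c" "mat2 a b c d $ 2 $ 2 = d"
  by (simp_all add: mat2_def)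

lemma mat2_eq_iff: "mat2 a b c d = mat2 a' b' c' d' \<longleftrightarrow> a = a' \<and> b = b' \<and> c = c' \<and> d = d'"
  by (auto simp: vec_eq_iff forall_2 mat2_def)

lemma mat2_entries: "M = mat2 (M$1$1) (M$1$2) (M$2$1) (M$2$2)"
  by (auto simp: vec_eq_iff forall_2 mat2_def)

lemma mat2_mult:
  "mat2 a b c d ** mat2 a' b' c' d' = mat2 (a*a' + b*c') (a*b' + b*d') (c*a' + d*c') (c*b' + d*d')"
  by (simp add: vec_eq_iff forall_2 matrix_matrix_mult_def sum_2)

lemma mat1_eq_mat2: "(mat 1 :: real^2^2) = mat2 1 0 0 1"
  by (simp add: vec_eq_iff forall_2 mat_def mat2_def)

lemma det_mat2: "det (mat2 a b c d) = a*d - b*c"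
  by (simp add: det_2)

lemma matrix_inv_unique:
  fixes A X :: "'a::comm_ring_1^'n^'n"
  assumes "A ** X = mat 1" "X ** A = mat 1"
  shows "matrix_inv A = X"
proof -
  have "A ** matrix_inv A = mat 1 \<and> matrix_inv A ** A = mat 1"
    unfolding matrix_inv_def by (rule someI[of _ X]) (use assms in blast)
  then have "matrix_inv A = (X ** A) ** matrix_inv A"
    using assms(2) by (simp add: matrix_mul_lid)
  also have "\<dots> = X"
    using \<open>A ** matrix_inv A = mat 1 \<and> _\<close> by (simp flip: matrix_mul_assoc add: matrix_mul_rid)
  finally show ?thesis .
qed

lemma matrix_inv_mat2:
  assumes "a*d - b*c = 1"
  shows "matrix_inv (mat2 a b c d) = mat2 d (-b) (-c) a"
  using assms by (intro matrix_inv_unique) (simp_all add: mat2_mult mat1_eq_mat2 mat2_eq_iff algebra_simps)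

lemma matrix_inv_cancel:
  fixes A :: "real^'n^'n"
  assumes "det A \<noteq> 0"
  shows "A ** matrix_inv A = mat 1" "matrix_inv A ** A = mat 1"
proof -
  have "\<exists>A'. A ** A' = mat 1 \<and> A' ** A = mat 1"
    using assms by (simp flip: invertible_det_nz add: invertible_def)
  then have "A ** matrix_inv A = mat 1 \<and> matrix_inv A ** A = mat 1"
    unfolding matrix_inv_def by (rule someI_ex)
  then show "A ** matrix_inv A = mat 1" "matrix_inv A ** A = mat 1" by auto
qed

lemma eval_word_Nil [simp]: "eval_word A B [] = mat 1"
  by (simp add: eval_word_def)

lemma eval_word_Cons [simp]: "eval_word A B (l # w) = letter_mat A B l ** eval_word A B w"
  by (simp add: eval_word_def)

lemma eval_word_append: "eval_word A B (v @ w) = eval_word A B v ** eval_word A B w"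
  by (induction v) (simp_all add: matrix_mul_lid matrix_mul_assoc)

lemma eval_word_single: "eval_word A B [l] = letter_mat A B l"
  by (simp add: matrix_mul_rid)

lemma letter_mat_inverse:
  assumes "det A \<noteq> 0" "det B \<noteq> 0"
  shows "letter_mat A B (g, e) ** letter_mat A B (g, \<not> e) = mat 1"
  using assms by (cases g; cases e) (simp_all add: matrix_inv_cancel)

lemma eval_word_inv_word:
  assumes "det A \<noteq> 0" "det B \<noteq> 0"
  shows "eval_word A B w ** eval_word A B (inv_word w) = mat 1"
proof (induction w)
  case Nil
  show ?case by (simp add: inv_word_def matrix_mul_lid)
next
  case (Cons l w)
  obtain g e where l: "l = (g, e)" by force
  have "inv_word (l # w) = inv_word w @ [(g, \<not> e)]"
    by (simp add: l inv_word_def)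
  then have "eval_word A B (l # w) ** eval_word A B (inv_word (l # w))
      = letter_mat A B l ** (eval_word A B w ** eval_word A B (inv_word w)) ** letter_mat A B (g, \<not> e)"
    by (simp add: eval_word_append eval_word_single matrix_mul_assoc)
  also have "\<dots> = mat 1"
    using Cons.IH letter_mat_inverse[OF assms] by (simp add: l matrix_mul_lid)
  finally show ?case .
qed

lemma det_eval_word:
  assumes "det A = 1" "det B = 1"
  shows "det (eval_word A B w) = 1"
proof (induction w)
  case (Cons l w)
  have "det (matrix_inv M) = 1" if "det M = 1" for M :: "real^2^2"
    using det_mul[of M "matrix_inv M"] that by (simp add: matrix_inv_cancel det_I)
  moreover obtain g e where "l = (g, e)" by force
  ultimately have "det (letter_mat A B l) = 1"
    using assms by (cases g; cases e) simp_all
  then show ?case using Cons.IH by (simp add: det_mul)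
qed (simp add: det_I)

lemma tb_relator_eq_mat1:
  assumes "det A \<noteq> 0" "det B \<noteq> 0"
    and "A ** eval_word A B (tb_word alpha beta) = eval_word A B (tb_word alpha beta) ** B"
  shows "eval_word A B (tb_relator alpha beta) = mat 1"
proof -
  let ?W = "eval_word A B (tb_word alpha beta)"
  have "eval_word A B (tb_relator alpha beta)
      = (A ** ?W) ** matrix_inv B ** eval_word A B (inv_word (tb_word alpha beta))"
    by (simp add: tb_relator_def eval_word_append eval_word_single matrix_mul_assoc)
  also have "\<dots> = ?W ** (B ** matrix_inv B) ** eval_word A B (inv_word (tb_word alpha beta))"
    by (simp add: assms(3) matrix_mul_assoc)
  also have "\<dots> = mat 1"
    using assms by (simp add: matrix_inv_cancel matrix_mul_rid eval_word_inv_word)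
  finally show ?thesis .
qed

definition riley_A :: "real \<Rightarrow> real^2^2" where
  "riley_A m = mat2 m 1 0 (1/m)"

definition riley_B :: "real \<Rightarrow> real \<Rightarrow> real^2^2" where
  "riley_B m u = mat2 m 0 u (1/m)"

lemma det_riley_A: "m \<noteq> 0 \<Longrightarrow> det (riley_A m) = 1"
  by (simp add: riley_A_def det_mat2)

lemma det_riley_B: "m \<noteq> 0 \<Longrightarrow> det (riley_B m u) = 1"
  by (simp add: riley_B_def det_mat2)

lemma riley_A_riley_B_not_commute:
  assumes "m \<noteq> 0" "m^2 \<noteq> 1"
  shows "riley_A m ** riley_B m u \<noteq> riley_B m u ** riley_A m"
  using assms by (simp add: riley_A_def riley_B_def mat2_mult mat2_eq_iff field_simps power2_eq_square)

lemma commute_riley_A_iff: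
  "riley_A m ** X = X ** riley_A m \<longleftrightarrow> X$2$1 = 0 \<and> X$1$2 * (m - 1/m) = X$1$1 - X$2$2"
  by (subst (1 2) mat2_entries) (auto simp: riley_A_def mat2_mult mat2_eq_iff algebra_simps)

lemma upper_triangular_mult_11: "Y$2$1 = 0 \<Longrightarrow> (X ** Y)$1$1 = X$1$1 * Y$1$1"
  for X Y :: "real^2^2"
  by (simp add: matrix_matrix_mult_def sum_2)

lemma commute_riley_A_eq_mat1:
  assumes "riley_A m ** X = X ** riley_A m" "det X = 1" "X$1$1 = 1" "m \<noteq> 0" "m^2 \<noteq> 1"
  shows "X = mat 1"
proof -
  have "m - 1/m \<noteq> 0"
    using assms(4,5) by (auto simp: field_simps power2_eq_square)
  moreover have "X$2$1 = 0" "X$1$2 * (m - 1/m) = X$1$1 - X$2$2"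
    using assms(1) by (simp_all add: commute_riley_A_iff)
  moreover have "X$2$2 = 1"
    using assms(2,3) \<open>X$2$1 = 0\<close> by (simp add: det_2)
  ultimately show ?thesis
    using assms(3) by (subst mat2_entries) (simp add: mat1_eq_mat2 mat2_eq_iff)
qed

lemma eval_word_replicate_commute_riley_A:
  assumes "riley_A m ** eval_word A B w = eval_word A B w ** riley_A m"
  shows "riley_A m ** eval_word A B (concat (replicate n w))
           = eval_word A B (concat (replicate n w)) ** riley_A m"
    and "eval_word A B (concat (replicate n w)) $1$1 = (eval_word A B w $1$1) ^ n"
proof (induction n)
  case 0
  show "riley_A m ** eval_word A B (concat (replicate 0 w))
      = eval_word A B (concat (replicate 0 w)) ** riley_A m"
    by (simp add: matrix_mul_lid matrix_mul_rid)
  show "eval_word A B (concat (replicate 0 w)) $1$1 = (eval_word A B w $1$1) ^ 0"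
    by (simp add: mat_def)
next
  case (Suc n)
  let ?W = "eval_word A B w" and ?R = "eval_word A B (concat (replicate n w))"
  show "riley_A m ** eval_word A B (concat (replicate (Suc n) w))
      = eval_word A B (concat (replicate (Suc n) w)) ** riley_A m"
    using assms Suc(1) by (simp add: eval_word_append matrix_mul_assoc) (metis matrix_mul_assoc)
  have "?R $2$1 = 0"
    using Suc(1) by (simp add: commute_riley_A_iff)
  then show "eval_word A B (concat (replicate (Suc n) w)) $1$1 = (?W $1$1) ^ Suc n"
    using Suc(2) by (simp add: eval_word_append upper_triangular_mult_11)
qed

lemma surgery_relator_eq_mat1:
  fixes m :: real and B :: "real^2^2" and alpha beta p q :: nat and r :: rat
  defines "\<Lambda> \<equiv> eval_word (riley_A m) B (tb_longitude alpha beta)"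
  assumes r: "quotient_of r = (int p, int q)"
    and m: "m \<noteq> 0" "m^2 \<noteq> 1" and B: "det B = 1"
    and comm: "riley_A m ** \<Lambda> = \<Lambda> ** riley_A m"
    and eigen: "m ^ p = (\<Lambda>$2$2) ^ q"
  shows "eval_word (riley_A m) B (surgery_relator alpha beta r) = mat 1"
proof -
  let ?A = "riley_A m"
  let ?X = "eval_word ?A B (concat (replicate p [(GA, True)]))"
    and ?Y = "eval_word ?A B (concat (replicate q (tb_longitude alpha beta)))"
  have rel: "surgery_relator alpha beta r
      = concat (replicate p [(GA, True)]) @ concat (replicate q (tb_longitude alpha beta))"
    by (simp add: surgery_relator_def r word_pow_def)
  have "?A ** eval_word ?A B [(GA, True)] = eval_word ?A B [(GA, True)] ** ?A"
    by (simp add: eval_word_single)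
  note X = eval_word_replicate_commute_riley_A[OF this, of p]
  note Y = eval_word_replicate_commute_riley_A[OF comm[unfolded \<Lambda>_def], of q, folded \<Lambda>_def]
  have "\<Lambda>$2$1 = 0"
    using comm by (simp add: commute_riley_A_iff)
  moreover have "det \<Lambda> = 1"
    unfolding \<Lambda>_def using det_riley_A[OF m(1)] B by (rule det_eval_word)
  ultimately have "\<Lambda>$1$1 * \<Lambda>$2$2 = 1"
    by (simp add: det_2)
  have "?Y$2$1 = 0"
    using Y(1) by (simp add: commute_riley_A_iff)
  then have "(?X ** ?Y)$1$1 = ?X$1$1 * ?Y$1$1"
    by (rule upper_triangular_mult_11)
  also have "\<dots> = m ^ p * (\<Lambda>$1$1) ^ q"
    unfolding X(2) Y(2) by (simp add: eval_word_single riley_A_def)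
  also have "\<dots> = (\<Lambda>$1$1 * \<Lambda>$2$2) ^ q"
    unfolding eigen power_mult_distrib by (rule mult.commute)
  finally have "(?X ** ?Y)$1$1 = 1"
    using \<open>\<Lambda>$1$1 * \<Lambda>$2$2 = 1\<close> by simp
  moreover have "?A ** (?X ** ?Y) = (?X ** ?Y) ** ?A"
    by (simp only: matrix_mul_assoc X(1)) (simp only: Y(1) flip: matrix_mul_assoc)
  moreover have "det (?X ** ?Y) = 1"
    using det_eval_word[OF det_riley_A[OF m(1)] B] by (simp only: eval_word_append [symmetric])
  ultimately have "?X ** ?Y = mat 1"
    using m by (intro commute_riley_A_eq_mat1)
  then show ?thesis
    by (simp add: rel eval_word_append)
qed

text \<open>The letters of the Riley representation multiplied by m: all entries become polynomials
  in m and u, so the identities below are decided by polynomial arithmetic.\<close>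

fun scaled_letter :: "real \<Rightarrow> real \<Rightarrow> gen \<times> bool \<Rightarrow> real^2^2" where
  "scaled_letter m u (GA, e) = (if e then mat2 (m^2) m 0 1 else mat2 1 (-m) 0 (m^2))"
| "scaled_letter m u (GB, e) = (if e then mat2 (m^2) 0 (m*u) 1 else mat2 1 0 (-(m*u)) (m^2))"

definition scaled_eval :: "real \<Rightarrow> real \<Rightarrow> word \<Rightarrow> real^2^2" where
  "scaled_eval m u w = foldr (\<lambda>l M. scaled_letter m u l ** M) w (mat 1)"

lemma scaled_eval_Nil [simp]: "scaled_eval m u [] = mat2 1 0 0 1"
  by (simp add: scaled_eval_def mat1_eq_mat2)

lemma scaled_eval_Cons [simp]: "scaled_eval m u (l # w) = scaled_letter m u l ** scaled_eval m u w"
  by (simp add: scaled_eval_def)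

lemma scaled_eval_append: "scaled_eval m u (v @ w) = scaled_eval m u v ** scaled_eval m u w"
  by (induction v) (simp_all add: matrix_mul_assoc flip: mat1_eq_mat2 add: matrix_mul_lid)

lemma letter_mat_riley_nth:
  assumes "m \<noteq> 0"
  shows "letter_mat (riley_A m) (riley_B m u) l $ i $ j = scaled_letter m u l $ i $ j / m"
proof -
  obtain g e where l: "l = (g, e)" by force
  from exhaust_2[of i] exhaust_2[of j] show ?thesis
    using assms by (cases g; cases e; elim disjE)
      (simp_all add: l riley_A_def riley_B_def matrix_inv_mat2 field_simps power2_eq_square)
qed

lemma eval_word_riley_nth:
  assumes "m \<noteq> 0"
  shows "eval_word (riley_A m) (riley_B m u) w $ i $ j = scaled_eval m u w $ i $ j / m ^ length w"
proof (induction w arbitrary: i j)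
  case Nil
  show ?case by (simp add: mat1_eq_mat2)
next
  case (Cons l w)
  show ?case
    using assms by (simp add: matrix_matrix_mult_def sum_2 letter_mat_riley_nth Cons.IH field_simps)
qed

lemma eval_word_riley_eqI:
  assumes "m \<noteq> 0" "scaled_eval m u v = scaled_eval m u w" "length v = length w"
  shows "eval_word (riley_A m) (riley_B m u) v = eval_word (riley_A m) (riley_B m u) w"
  using assms by (simp add: vec_eq_iff eval_word_riley_nth)

lemma tb_word_11_3:
  "tb_word 11 3 = [(GB,True), (GA,True), (GB,True), (GA,False), (GB,False),
                   (GA,False), (GB,False), (GA,True), (GB,True), (GA,True)]"
  by (simp add: tb_word_def tb_sign_def upt_rec)

lemma tb_longitude_11_3:
  "tb_longitude 11 3 = tb_word 11 3 @ rev (tb_word 11 3) @ replicate 4 (GA, False)"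
proof -
  have "tb_sigma 11 3 = 2"
    by (simp add: tb_sigma_def tb_sign_def sum.atLeast_Suc_lessThan)
  then show ?thesis
    by (simp add: tb_longitude_def word_pow_def inv_word_def numeral_eq_Suc)
qed

definition riley_poly :: "real \<Rightarrow> real \<Rightarrow> real" where
  "riley_poly t u = t^8*u + 4*t^7*u^2 - 3*t^7*u + 6*t^6*u^3 - 9*t^6*u^2 + 6*t^6*u - t^6
    + 4*t^5*u^4 - 9*t^5*u^3 + 16*t^5*u^2 - 11*t^5*u + 3*t^5 + t^4*u^5 - 3*t^4*u^4
    + 14*t^4*u^3 - 19*t^4*u^2 + 13*t^4*u - 3*t^4 + 4*t^3*u^4 - 9*t^3*u^3 + 16*t^3*u^2
    - 11*t^3*u + 3*t^3 + 6*t^2*u^3 - 9*t^2*u^2 + 6*t^2*u - t^2 + 4*t*u^2 - 3*t*u + u"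

text \<open>The remainder of the (2,2) entry of the scaled longitude modulo the Riley polynomial.\<close>

definition longitude_rem :: "real \<Rightarrow> real \<Rightarrow> real" where
  "longitude_rem t u = t^10 - t^17*u - 2*t^16*u^2 + 2*t^16*u - t^15*u^3 + 2*t^15*u^2 - 3*t^15*u
    + t^15 - t^14*u^2 + 2*t^14*u - 2*t^14 + t^13*u^3 - 2*t^13*u^2 + t^13*u + 3*t^12*u^2
    - 4*t^12*u + t^12 + 3*t^11*u - 2*t^11"

lemma knot_relation_scaled:
  assumes "riley_poly (m^2) u = 0"
  shows "scaled_letter m u (GA, True) ** scaled_eval m u (tb_word 11 3)
       = scaled_eval m u (tb_word 11 3) ** scaled_letter m u (GB, True)"
  using assms unfolding tb_word_11_3 riley_poly_def
  by (simp add: mat2_mult mat2_eq_iff) algebra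

lemma longitude_commute_scaled:
  assumes "riley_poly (m^2) u = 0"
  shows "scaled_letter m u (GA, True) ** scaled_eval m u (tb_longitude 11 3)
       = scaled_eval m u (tb_longitude 11 3) ** scaled_letter m u (GA, True)"
  using assms unfolding tb_longitude_11_3 tb_word_11_3 scaled_eval_append riley_poly_def
  by (simp add: mat2_mult mat2_eq_iff numeral_eq_Suc) (intro conjI; algebra)

lemma longitude_22_scaled:
  assumes "riley_poly (m^2) u = 0"
  shows "scaled_eval m u (tb_longitude 11 3) $2$2 = longitude_rem (m^2) u"
  using assms unfolding tb_longitude_11_3 tb_word_11_3 scaled_eval_append riley_poly_def
    longitude_rem_def
  by (simp add: mat2_mult numeral_eq_Suc) algebra

lemma longitude_22_scaled_reducible: "scaled_eval m 0 (tb_longitude 11 3) $2$2 = m^24"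
  unfolding tb_longitude_11_3 tb_word_11_3 scaled_eval_append
  by (simp add: mat2_mult numeral_eq_Suc)

lemma knot_relation_riley:
  assumes "m \<noteq> 0" "riley_poly (m^2) u = 0"
  shows "riley_A m ** eval_word (riley_A m) (riley_B m u) (tb_word 11 3)
       = eval_word (riley_A m) (riley_B m u) (tb_word 11 3) ** riley_B m u"
proof -
  have "eval_word (riley_A m) (riley_B m u) ((GA, True) # tb_word 11 3)
      = eval_word (riley_A m) (riley_B m u) (tb_word 11 3 @ [(GB, True)])"
    using knot_relation_scaled[OF assms(2)]
    by (intro eval_word_riley_eqI[OF assms(1)])
      (simp_all add: scaled_eval_append matrix_mul_rid flip: mat1_eq_mat2)
  then show ?thesis
    by (simp add: eval_word_append eval_word_single)
qed

lemma longitude_commute_riley: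
  assumes "m \<noteq> 0" "riley_poly (m^2) u = 0"
  shows "riley_A m ** eval_word (riley_A m) (riley_B m u) (tb_longitude 11 3)
       = eval_word (riley_A m) (riley_B m u) (tb_longitude 11 3) ** riley_A m"
proof -
  have "eval_word (riley_A m) (riley_B m u) ((GA, True) # tb_longitude 11 3)
      = eval_word (riley_A m) (riley_B m u) (tb_longitude 11 3 @ [(GA, True)])"
    using longitude_commute_scaled[OF assms(2)]
    by (intro eval_word_riley_eqI[OF assms(1)])
      (simp_all add: scaled_eval_append matrix_mul_rid flip: mat1_eq_mat2)
  then show ?thesis
    by (simp add: eval_word_append eval_word_single)
qed

lemma length_tb_longitude_11_3: "length (tb_longitude 11 3) = 24"
  by (simp add: tb_longitude_11_3 tb_word_11_3)

lemma longitude_22_riley: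
  "m \<noteq> 0 \<Longrightarrow> riley_poly (m^2) u = 0 \<Longrightarrow>
    eval_word (riley_A m) (riley_B m u) (tb_longitude 11 3) $2$2 = longitude_rem (m^2) u / m^24"
  by (simp add: eval_word_riley_nth longitude_22_scaled length_tb_longitude_11_3)

lemma longitude_22_riley_reducible:
  "m \<noteq> 0 \<Longrightarrow> eval_word (riley_A m) (riley_B m 0) (tb_longitude 11 3) $2$2 = 1"
  by (simp add: eval_word_riley_nth longitude_22_scaled_reducible length_tb_longitude_11_3)

definition curve_num :: "real \<Rightarrow> real" where
  "curve_num z = z^5 - 3*z^4 + 2*z^3 - z^2 + 3*z - 1"

definition curve_den :: "real \<Rightarrow> real" where
  "curve_den z = z^2 * (z - 1) * (z - 2)"

text \<open>The (2,2) entry of the longitude on the zero set of the Riley polynomial, in the coordinates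
  t = m^2 and z = u + t + 1/t.\<close>

definition longitude_eigenvalue :: "real \<Rightarrow> real \<Rightarrow> real" where
  "longitude_eigenvalue t z =
     t * ((z - 1)^2 * t^3 - (z^3 - 2*z^2 + 1) * t^2 - (z - 1)^2 * t + z^2 * (z - 2))"

lemma riley_poly_curve_coordinates:
  assumes "t \<noteq> 0" "z = u + t + 1/t"
  shows "riley_poly t u = t^4 * (curve_num z - (t + 1/t) * curve_den z)"
proof -
  define t' where "t' = 1/t"
  have "t * t' = 1" "u = z - t - t'"
    using assms by (simp_all add: t'_def)
  then show ?thesis
    unfolding t'_def[symmetric] riley_poly_def curve_num_def curve_den_def by algebra
qed

lemma longitude_rem_curve_coordinates:
  assumes "t \<noteq> 0" "z = u + t + 1/t"
  shows "longitude_rem t u = t^12 * longitude_eigenvalue t z"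
proof -
  define t' where "t' = 1/t"
  have "t * t' = 1" "u = z - t - t'"
    using assms by (simp_all add: t'_def)
  then show ?thesis
    unfolding t'_def[symmetric] longitude_rem_def longitude_eigenvalue_def by algebra
qed

definition curve_s :: "real \<Rightarrow> real" where
  "curve_s z = curve_num z / curve_den z"

definition curve_t :: "real \<Rightarrow> real" where
  "curve_t z = (curve_s z + sqrt ((curve_s z)^2 - 4)) / 2"

definition curve_m :: "real \<Rightarrow> real" where
  "curve_m z = sqrt (curve_t z)"

definition curve_u :: "real \<Rightarrow> real" where
  "curve_u z = z - curve_t z - 1 / curve_t z"

lemma curve_den_pos: "2 < z \<Longrightarrow> 0 < curve_den z"
  by (simp add: curve_den_def)

lemma curve_s_gt_2:
  assumes "2 < z" "z < 3"
  shows "2 < curve_s z"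
proof -
  define e where "e = z - 2"
  have "curve_num z - 2 * curve_den z = (1 - e) + 3*e^2 + 8*e^3 + 5*e^4 + e^5"
    unfolding e_def curve_num_def curve_den_def by algebra
  moreover have "0 < e" "e < 1"
    using assms by (simp_all add: e_def)
  ultimately have "2 * curve_den z < curve_num z"
    by (smt (verit) zero_le_power)
  then show ?thesis
    using curve_den_pos[OF assms(1)] by (simp add: curve_s_def field_simps)
qed

lemma larger_root_of_trace:
  fixes s :: real
  assumes "2 < s"
  defines "t \<equiv> (s + sqrt (s^2 - 4)) / 2"
  shows "1 < t" "t + 1/t = s" "s - 1 \<le> t"
proof -
  define r where "r = sqrt (s^2 - 4)"
  have "0 \<le> s^2 - 4"
    using assms power_strict_mono[of 2 s 2] by simp
  then have r2: "r^2 = s^2 - 4" and "0 \<le> r"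
    by (simp_all add: r_def)
  have "sqrt ((s - 2)^2) \<le> r"
    unfolding r_def using assms by (intro real_sqrt_le_mono) (simp add: power2_eq_square algebra_simps)
  then have "s - 2 \<le> r"
    using assms by simp
  show "1 < t" "s - 1 \<le> t"
    using \<open>0 \<le> r\<close> \<open>s - 2 \<le> r\<close> assms by (simp_all add: t_def r_def)
  have "t * t + 1 = s * t"
    using r2 unfolding t_def r_def[symmetric] by (simp add: field_simps power2_eq_square)
  then show "t + 1/t = s"
    using \<open>1 < t\<close> by (simp add: field_simps)
qed

lemma curve_point:
  assumes "2 < z" "z < 3"
  shows "1 < curve_m z" "(curve_m z)^2 = curve_t z" "curve_s z - 1 \<le> curve_t z"
    and "riley_poly (curve_t z) (curve_u z) = 0"
proof -
  note t = larger_root_of_trace[OF curve_s_gt_2[OF assms], folded curve_t_def]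
  show "1 < curve_m z" "(curve_m z)^2 = curve_t z" "curve_s z - 1 \<le> curve_t z"
    using t by (simp_all add: curve_m_def)
  have "z = curve_u z + curve_t z + 1 / curve_t z"
    by (simp add: curve_u_def)
  then have "riley_poly (curve_t z) (curve_u z)
      = curve_t z ^ 4 * (curve_num z - curve_s z * curve_den z)"
    using t by (simp add: riley_poly_curve_coordinates)
  then show "riley_poly (curve_t z) (curve_u z) = 0"
    using curve_den_pos[OF assms(1)] by (simp add: curve_s_def)
qed

lemma curve_longitude_22:
  assumes "2 < z" "z < 3"
  shows "eval_word (riley_A (curve_m z)) (riley_B (curve_m z) (curve_u z)) (tb_longitude 11 3) $2$2
       = longitude_eigenvalue (curve_t z) z"
proof -
  note c = curve_point[OF assms]
  have "curve_t z \<noteq> 0" "curve_m z \<noteq> 0"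
    using c(1,2) by auto
  moreover have "z = curve_u z + curve_t z + 1 / curve_t z"
    by (simp add: curve_u_def)
  moreover have "curve_m z ^ 24 = (curve_m z ^ 2) ^ 12"
    by (simp flip: power_mult)
  ultimately show ?thesis
    using c by (simp add: longitude_22_riley longitude_rem_curve_coordinates)
qed

definition z_top :: real where
  "z_top = (3 + sqrt 5) / 2"

lemma z_top_bounds: "2 < z_top" "z_top < 3"
proof -
  have "1 < sqrt 5" "sqrt 5 < 3"
    by (simp_all add: real_less_rsqrt real_less_lsqrt)
  then show "2 < z_top" "z_top < 3"
    by (simp_all add: z_top_def)
qed

lemma curve_u_z_top: "curve_u z_top = 0"
proof -
  have "z_top^2 - 3 * z_top + 1 = 0"
    by (simp add: z_top_def power2_eq_square field_simps)
  moreover have "curve_num z - z * curve_den z = - (z^2 - 3*z + 1)" for z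
    unfolding curve_num_def curve_den_def by algebra
  ultimately have "curve_num z_top = z_top * curve_den z_top"
    by (smt (verit))
  then have "curve_s z_top = z_top"
    using curve_den_pos[OF z_top_bounds(1)] by (simp add: curve_s_def)
  then show ?thesis
    using larger_root_of_trace(2)[OF curve_s_gt_2[OF z_top_bounds]]
    by (simp add: curve_u_def curve_t_def)
qed

lemma longitude_eigenvalue_z_top: "longitude_eigenvalue (curve_t z_top) z_top = 1"
  using curve_longitude_22[OF z_top_bounds] curve_point(1)[OF z_top_bounds]
  by (simp add: curve_u_z_top longitude_22_riley_reducible)

lemma curve_t_at_top: "filterlim curve_t at_top (at_right 2)"
proof -
  have "curve_num 2 = 1" "curve_den 2 = 0"
    by (simp_all add: curve_num_def curve_den_def)
  moreover have "(curve_num \<longlongrightarrow> curve_num 2) (at_right 2)" "(curve_den \<longlongrightarrow> curve_den 2) (at_right 2)"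
    unfolding curve_num_def curve_den_def by (intro tendsto_intros)+
  moreover have "\<forall>\<^sub>F z in at_right 2. 0 < curve_den z"
    using eventually_at_right_less by (rule eventually_mono) (rule curve_den_pos)
  ultimately have "filterlim curve_s at_top (at_right 2)"
    unfolding curve_s_def by (intro LIM_at_top_divide[where a = 1]) simp_all
  then have "filterlim (\<lambda>z. -1 + curve_s z) at_top (at_right 2)"
    by (rule filterlim_tendsto_add_at_top[OF tendsto_const])
  moreover have "\<forall>\<^sub>F z in at_right 2. -1 + curve_s z \<le> curve_t z"
    by (intro eventually_at_rightI[of 2 3]) (simp_all add: curve_point(3))
  ultimately show ?thesis
    by (rule filterlim_at_top_mono)
qed

lemma continuous_on_curve:
  assumes "2 < a"
  shows "continuous_on {a..b} curve_t" "continuous_on {a..b} curve_m"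
proof -
  have "\<forall>z\<in>{a..b}. curve_den z \<noteq> 0"
    using assms by (auto simp: curve_den_def)
  then have "continuous_on {a..b} curve_s"
    unfolding curve_s_def curve_num_def curve_den_def by (intro continuous_intros) auto
  then show t: "continuous_on {a..b} curve_t"
    unfolding curve_t_def by (auto intro!: continuous_intros)
  show "continuous_on {a..b} curve_m"
    unfolding curve_m_def by (intro continuous_intros t)
qed

lemma longitude_eigenvalue_ge:
  assumes "2 \<le> z" "z \<le> 3" "21 \<le> t"
  shows "t^4 / 2 \<le> longitude_eigenvalue t z"
proof -
  have "1 \<le> (z - 1)^2" "(z - 1)^2 \<le> 4" "0 \<le> z^2 * (z - 2)" "z^2 * (z - 2) \<le> 9"
    using assms(1,2) by (simp_all add: power_mono[of 1 "z - 1" 2, simplified]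
        power_mono[of "z - 1" 2 2, simplified] mult_mono[of "z^2" 9 "z - 2" 1, simplified]
        power_mono[of z 3 2, simplified])
  moreover have "t^3 \<le> (z - 1)^2 * t^3" "(z^2 * (z - 2) + 1) * t^2 \<le> 10 * t^2"
      "(z - 1)^2 * t \<le> 4 * t"
    using calculation assms(3) by (simp_all add: mult_right_mono[of 1 "(z - 1)^2", simplified])
  ultimately have "t^3 - 10 * t^2 - 4 * t
      \<le> (z - 1)^2 * t^3 - (z^2 * (z - 2) + 1) * t^2 - (z - 1)^2 * t + z^2 * (z - 2)"
    by linarith
  moreover have "t^3 / 2 \<le> t^3 - 10 * t^2 - 4 * t"
  proof -
    have "4 \<le> t * (t / 2 - 10)"
      using assms(3) mult_mono[of 21 t "1/2" "t / 2 - 10"] by simp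
    then show ?thesis
      using assms(3) mult_left_mono[of 4 "t * (t / 2 - 10)" t]
      by (simp add: power2_eq_square power3_eq_cube algebra_simps)
  qed
  ultimately have "t * (t^3 / 2) \<le> longitude_eigenvalue t z"
    using assms(3) unfolding longitude_eigenvalue_def
    by (intro mult_left_mono) (simp_all add: power2_eq_square power3_eq_cube algebra_simps)
  then show ?thesis
    by (simp add: power3_eq_cube power4_eq_xxxx)
qed

lemma exists_curve_point_surgery:
  fixes p q :: nat
  assumes "0 < p" "p < 8 * q"
  shows "\<exists>z. 2 < z \<and> z < 3 \<and> curve_m z ^ p = longitude_eigenvalue (curve_t z) z ^ q"
proof -
  define g where "g z = curve_m z ^ p - longitude_eigenvalue (curve_t z) z ^ q" for z
  have "0 < g z_top"
    using one_less_power[OF curve_point(1)[OF z_top_bounds] assms(1)]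
    by (simp add: g_def longitude_eigenvalue_z_top)
  have "\<forall>\<^sub>F z in at_right 2. z < z_top"
    by (rule eventually_at_rightI[of 2 z_top]) (simp_all add: z_top_bounds)
  moreover have "\<forall>\<^sub>F z in at_right 2. max 21 (4 ^ q) < curve_t z"
    using curve_t_at_top unfolding filterlim_at_top_dense by blast
  ultimately have "\<forall>\<^sub>F z in at_right 2. 2 < z \<and> z < z_top \<and> max 21 (4 ^ q) < curve_t z"
    using eventually_at_right_less by eventually_elim auto
  then obtain z1 where z1: "2 < z1" "z1 < z_top" "21 \<le> curve_t z1" "4 ^ q < curve_t z1"
    using eventually_happens'[of "at_right 2"] by force
  have "g z1 < 0"
  proof -
    define m where "m = curve_m z1"
    have m: "1 < m" "m^2 = curve_t z1"
      using curve_point[of z1] z1 z_top_bounds by (simp_all add: m_def)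
    have "((2::real) ^ q)^2 = (2^2)^q"
      by (simp only: power_mult[symmetric] mult.commute)
    then have "(2 ^ q)^2 < m^2"
      using z1(4) m(2) by simp
    then have "2 ^ q < m"
      by (rule power_less_imp_less_base) (use m(1) in simp)
    have "m ^ p * 2 ^ q \<le> m ^ (8 * q - 1) * 2 ^ q"
      using m(1) assms(2) by (intro mult_right_mono power_increasing) simp_all
    also have "\<dots> < m ^ (8 * q - 1) * m"
      using \<open>2 ^ q < m\<close> m(1) by (intro mult_strict_left_mono) simp_all
    also have "\<dots> = m ^ (8 * q - 1 + 1)"
      by (simp only: power_add power_one_right)
    also have "\<dots> = (m ^ 8) ^ q"
      using assms by (simp add: power_mult)
    finally have "m ^ p < (m ^ 8) ^ q / 2 ^ q"
      by (simp add: pos_less_divide_eq)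
    then have "m ^ p < (m ^ 8 / 2) ^ q"
      by (simp only: power_divide)
    also have "\<dots> \<le> longitude_eigenvalue (curve_t z1) z1 ^ q"
    proof (rule power_mono)
      have "m ^ 8 = (m^2)^4"
        by (simp only: power_mult[symmetric]) simp
      then have "m ^ 8 = curve_t z1 ^ 4"
        using m(2) by simp
      then show "m ^ 8 / 2 \<le> longitude_eigenvalue (curve_t z1) z1"
        using longitude_eigenvalue_ge[of z1 "curve_t z1"] z1 z_top_bounds by simp
    qed simp
    finally show ?thesis
      by (simp add: g_def m_def)
  qed
  moreover have "continuous_on {z1..z_top} g"
    using continuous_on_curve[OF z1(1)] unfolding g_def longitude_eigenvalue_def
    by (intro continuous_intros)
  ultimately obtain z where "z1 \<le> z" "z \<le> z_top" "g z = 0"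
    using IVT'[of g z1 0 z_top] \<open>0 < g z_top\<close> z1(2) by auto
  then show ?thesis
    using z1(1) z_top_bounds by (intro exI[of _ z]) (simp add: g_def)
qed

lemma quotient_of_between:
  fixes r :: rat
  assumes "0 < r" "r < of_nat c"
  obtains p q :: nat where "quotient_of r = (int p, int q)" "0 < p" "p < c * q"
proof -
  obtain a b where ab: "quotient_of r = (a, b)"
    by (cases "quotient_of r")
  have "0 < b" and r: "r = of_int a / of_int b"
    using quotient_of_denom_pos[OF ab] quotient_of_div[OF ab] by simp_all
  have "(0 :: rat) < of_int a"
    using assms(1) \<open>0 < b\<close> unfolding r by (simp add: zero_less_divide_iff)
  moreover have "(of_int a :: rat) < of_int (int c * b)"
    using assms(2) \<open>0 < b\<close> unfolding r by (simp add: divide_less_eq)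
  ultimately have "0 < a" "a < int c * b"
    by (simp_all only: of_int_less_iff of_int_0)
  then show ?thesis
    using \<open>0 < b\<close> ab by (intro that[of "nat a" "nat b"]) (simp_all add: nat_less_iff)
qed

theorem mainTheorem12:
  fixes r :: rat
  assumes "0 < r" and "r < 8"
  shows "has_nonabelian_SL2R_rep_surgery 11 3 r"
proof -
  obtain p q where r: "quotient_of r = (int p, int q)" and "0 < p" "p < 8 * q"
    using quotient_of_between[of r 8] assms by auto
  then obtain z where z: "2 < z" "z < 3"
    and eigen: "curve_m z ^ p = longitude_eigenvalue (curve_t z) z ^ q"
    using exists_curve_point_surgery by blast
  define m u where "m = curve_m z" and "u = curve_u z"
  have "1 < m" "riley_poly (m^2) u = 0"
    using curve_point[OF z] by (simp_all add: m_def u_def)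
  then have m: "m \<noteq> 0" "m^2 \<noteq> 1"
    by (simp_all add: power2_eq_square less_1_mult[THEN less_imp_neq, symmetric])
  show ?thesis
    unfolding has_nonabelian_SL2R_rep_surgery_def
  proof (intro exI conjI)
    show "det (riley_A m) = 1" "det (riley_B m u) = 1"
      using m(1) by (simp_all add: det_riley_A det_riley_B)
    show "eval_word (riley_A m) (riley_B m u) (tb_relator 11 3) = mat 1"
      using m(1) \<open>riley_poly (m^2) u = 0\<close>
      by (intro tb_relator_eq_mat1 knot_relation_riley) (simp_all add: det_riley_A det_riley_B)
    show "eval_word (riley_A m) (riley_B m u) (surgery_relator 11 3 r) = mat 1"
      using r m det_riley_B[OF m(1)] longitude_commute_riley[OF m(1) \<open>riley_poly (m^2) u = 0\<close>]
        eigen curve_longitude_22[OF z]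
      by (intro surgery_relator_eq_mat1) (simp_all add: m_def u_def)
    show "riley_A m ** riley_B m u \<noteq> riley_B m u ** riley_A m"
      using m by (rule riley_A_riley_B_not_commute)
  qed
qed

end
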